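(* For $t\in\mathbb N\cup\{\infty\}$ and any nonroot vertex $u$, let $a^t_u(\eta,S)\in\{0,1\}$ be the indicator that $u$ is visited by some frog by time $t$ in the frog model $(\eta,S)$, and let $a^t(\eta,S)=\sum_{v\neq\emptyset}a^t_v(\eta,S)$ be the total number of nonroot vertices visited by time $t$. Then $a^t_u$ and $a^t$ are continuous icv statistics and continuous pgf statistics.
   Context: Frog model: $G$ countable with root $\emptyset$; $(\eta,S)$ consists of counts $\eta(v)\in\{0,1,\dots\}$ for $v\ne\emptyset$ and paths $S_\cdot(v,i)$ with $S_0(v,i)=v$. One active frog starts at $\emptyset$ at time $0$ and is at $S_j(\emptyset,1)$ at time $j$; a frog activated at time $s$ at $v$ is at $S_j(v,i)$ at time $s+j$; when an active frog is at a vertex with sleeping frogs, all of them activate. $\sigma_{P_\cdot}(\eta,S)$: add an extra frog with path $P_\cdot$ at $P_0$ (nonroot). $\Delta_{P_\cdot}f(\eta,S)=f(\sigma_{P_\cdot}(\eta,S))-f(\eta,S)$. $f$ (valued in $[0,\infty]$) is an icv statistic if for all $(\eta,S)$ and paths $P^1_\cdot,\dots,P^m_\cdot$ with a common start: (i) for $m=1,2$, $(-1)^m\Delta_{P^1_\cdot}\cdots\Delta_{P^m_\cdot}f(\eta,S)\le0$ whenever all values $f(\sigma_{P^{u_1}_\cdot}\cdots\sigma_{P^{u_j}_\cdot}(\eta,S))$, $\{u_1,\dots,u_j\}\subseteq\{1,\dots,m\}$, are finite; (ii) $f(\eta,S)=\infty\Rightarrow f(\sigma_{P^1_\cdot}(\eta,S))=\infty$;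 (iii) $f(\sigma_{P^1_\cdot}\sigma_{P^2_\cdot}(\eta,S))=\infty\Rightarrow f(\sigma_{P^i_\cdot}(\eta,S))=\infty$ for $i=1$ or $2$. $f$ is a pgf statistic if (ii),(iii) hold and (i) holds for all $m\ge1$. $f$ is continuous if $\eta_k(v)\nearrow\eta(v)$ for all $v$ implies $f(\eta_k,S)\nearrow f(\eta,S)$. *)

theory Defs
  imports "HOL-Analysis.Analysis" "HOL-Library.Extended_Nat"
begin

text \<open>A frog configuration (eta, S): eta v = number of sleeping frogs at v,
  S v i j = position of the i-th frog of v after j steps. The root is a parameter r;
  its count eta r is unused (normalised to 0) and the root frog is S r 1.\<close>

type_synonym 'v config = "('v \<Rightarrow> nat) \<times> ('v \<Rightarrow> nat \<Rightarrow> nat \<Rightarrow> 'v)"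

definition valid_config :: "'v \<Rightarrow> 'v config \<Rightarrow> bool" where
  "valid_config r c = (fst c r = 0 \<and> (\<forall>v i. snd c v i 0 = v))"

text \<open>reach r eta S u n: along some activation chain, an active frog is at u at time n.
  Vertex u is visited by time t iff reach r eta S u n for some n \<le> t.\<close>

inductive reach :: "'v \<Rightarrow> ('v \<Rightarrow> nat) \<Rightarrow> ('v \<Rightarrow> nat \<Rightarrow> nat \<Rightarrow> 'v) \<Rightarrow> 'v \<Rightarrow> nat \<Rightarrow> bool"
  for r eta S where
  start: "reach r eta S (S r 1 j) j"
| step: "reach r eta S v s \<Longrightarrow> v \<noteq> r \<Longrightarrow> 1 \<le> i \<Longrightarrow> i \<le> eta v
          \<Longrightarrow> reach r eta S (S v i j) (s + j)"

definition visited_by :: "'v \<Rightarrow> enat \<Rightarrow> 'v \<Rightarrow> 'v config \<Rightarrow> bool" where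
  "visited_by r t u c = (\<exists>n. enat n \<le> t \<and> reach r (fst c) (snd c) u n)"

definition a_vis :: "'v \<Rightarrow> enat \<Rightarrow> 'v \<Rightarrow> 'v config \<Rightarrow> ennreal" where
  "a_vis r t u c = (if visited_by r t u c then 1 else 0)"

definition a_tot :: "'v \<Rightarrow> enat \<Rightarrow> 'v config \<Rightarrow> ennreal" where
  "a_tot r t c = (\<Sum>\<^sub>\<infinity>v\<in>{v. v \<noteq> r}. a_vis r t v c)"

text \<open>sigma_P: add an extra frog with path P at P 0 (as frog number eta(P 0)+1).\<close>

definition sigma :: "(nat \<Rightarrow> 'v) \<Rightarrow> 'v config \<Rightarrow> 'v config" where
  "sigma P c = ((fst c)(P 0 := Suc (fst c (P 0))),
                (snd c)(P 0 := (snd c (P 0))(Suc (fst c (P 0)) := P)))"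

definition DeltaR :: "(nat \<Rightarrow> 'v) \<Rightarrow> ('v config \<Rightarrow> real) \<Rightarrow> 'v config \<Rightarrow> real" where
  "DeltaR P g c = g (sigma P c) - g c"

fun Dit :: "(nat \<Rightarrow> 'v) list \<Rightarrow> ('v config \<Rightarrow> real) \<Rightarrow> 'v config \<Rightarrow> real" where
  "Dit [] g = g"
| "Dit (P # Ps) g = DeltaR P (Dit Ps g)"

definition common_start :: "'v \<Rightarrow> (nat \<Rightarrow> 'v) list \<Rightarrow> bool" where
  "common_start r Ps = (\<exists>v. v \<noteq> r \<and> (\<forall>P\<in>set Ps. P 0 = v))"

definition all_finite :: "('v config \<Rightarrow> ennreal) \<Rightarrow> 'v config \<Rightarrow> (nat \<Rightarrow> 'v) list \<Rightarrow> bool" where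
  "all_finite f c Ps = (\<forall>I \<subseteq> {..<length Ps}. f (fold sigma (nths Ps I) c) \<noteq> \<infinity>)"

definition cond_i :: "'v \<Rightarrow> nat \<Rightarrow> ('v config \<Rightarrow> ennreal) \<Rightarrow> bool" where
  "cond_i r m f = (\<forall>c Ps. valid_config r c \<longrightarrow> length Ps = m \<longrightarrow> common_start r Ps
      \<longrightarrow> all_finite f c Ps \<longrightarrow> (-1) ^ m * Dit Ps (\<lambda>y. enn2real (f y)) c \<le> 0)"

definition cond_ii :: "'v \<Rightarrow> ('v config \<Rightarrow> ennreal) \<Rightarrow> bool" where
  "cond_ii r f = (\<forall>c P. valid_config r c \<longrightarrow> P 0 \<noteq> r \<longrightarrow> f c = \<infinity> \<longrightarrow> f (sigma P c) = \<infinity>)"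

definition cond_iii :: "'v \<Rightarrow> ('v config \<Rightarrow> ennreal) \<Rightarrow> bool" where
  "cond_iii r f = (\<forall>c P1 P2. valid_config r c \<longrightarrow> P1 0 \<noteq> r \<longrightarrow> P1 0 = P2 0 \<longrightarrow>
      f (sigma P1 (sigma P2 c)) = \<infinity> \<longrightarrow> f (sigma P1 c) = \<infinity> \<or> f (sigma P2 c) = \<infinity>)"

definition icv_stat :: "'v \<Rightarrow> ('v config \<Rightarrow> ennreal) \<Rightarrow> bool" where
  "icv_stat r f = (cond_i r 1 f \<and> cond_i r 2 f \<and> cond_ii r f \<and> cond_iii r f)"

definition pgf_stat :: "'v \<Rightarrow> ('v config \<Rightarrow> ennreal) \<Rightarrow> bool" where
  "pgf_stat r f = ((\<forall>m\<ge>1. cond_i r m f) \<and> cond_ii r f \<and> cond_iii r f)"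

definition continuous_stat :: "'v \<Rightarrow> ('v config \<Rightarrow> ennreal) \<Rightarrow> bool" where
  "continuous_stat r f = (\<forall>etas eta S. valid_config r (eta, S) \<longrightarrow> (\<forall>k. valid_config r (etas k, S)) \<longrightarrow>
      (\<forall>v. incseq (\<lambda>k. etas k v) \<and> (\<lambda>k. etas k v) \<longlonglongrightarrow> eta v) \<longrightarrow>
      incseq (\<lambda>k. f (etas k, S)) \<and> (\<lambda>k. f (etas k, S)) \<longlonglongrightarrow> f (eta, S))"

end

theory Submission
  imports Defs
begin

text \<open>Whether a vertex is visited depends only on the sets of paths of the frogs sleeping at
  the vertices. Adding several frogs at one vertex v reaches no more than adding the best single
  one of them, since all frogs at v wake up together. Hence the indicator h of u not being visited
  satisfies h(\<sigma>_P \<sigma>_Q c) = h(\<sigma>_P c) h(\<sigma>_Q c) for paths P, Q starting at v, and the iterated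
  differences of h along P_1, ..., P_m are h(c) \<Prod>_i (h(\<sigma>_{P_i} c) - 1), of sign (-1)^m because
  h \<le> 1. The number of visited vertices of a set A is the counting measure of its visited part;
  when finite it is a finite sum of such indicators. Continuity is monotone convergence of that
  measure, as each visit involves only finitely many frog counts.\<close>

definition frogs :: "'v config \<Rightarrow> 'v \<Rightarrow> (nat \<Rightarrow> 'v) set" where
  "frogs c w = snd c w ` {1..fst c w}"

lemma frogs_sigma: "frogs (sigma P c) = (frogs c)(P 0 := insert P (frogs c (P 0)))"
  by (auto simp: fun_eq_iff frogs_def sigma_def atLeastAtMostSuc_conv fun_upd_image)

lemma snd_fold_sigma_root:
  "\<forall>P\<in>set L. P 0 = v \<Longrightarrow> v \<noteq> r \<Longrightarrow> snd (fold sigma L c) r = snd c r"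
  by (induction L arbitrary: c) (auto simp: sigma_def)

lemma frogs_fold_sigma:
  "\<forall>P\<in>set L. P 0 = v \<Longrightarrow> frogs (fold sigma L c) = (frogs c)(v := frogs c v \<union> set L)"
  by (induction L arbitrary: c) (auto simp: frogs_sigma fun_eq_iff)

inductive reach_frogs :: "'v \<Rightarrow> (nat \<Rightarrow> 'v) \<Rightarrow> ('v \<Rightarrow> (nat \<Rightarrow> 'v) set) \<Rightarrow> 'v \<Rightarrow> nat \<Rightarrow> bool"
  for r S0 R where
  start: "reach_frogs r S0 R (S0 j) j"
| step: "reach_frogs r S0 R v s \<Longrightarrow> v \<noteq> r \<Longrightarrow> P \<in> R v \<Longrightarrow> reach_frogs r S0 R (P j) (s + j)"

lemma reach_iff_reach_frogs:
  "reach r (fst c) (snd c) x n \<longleftrightarrow> reach_frogs r (snd c r 1) (frogs c) x n"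
proof
  show "reach r (fst c) (snd c) x n \<Longrightarrow> reach_frogs r (snd c r 1) (frogs c) x n"
    by (induction rule: reach.induct) (auto intro: reach_frogs.intros simp: frogs_def)
  show "reach_frogs r (snd c r 1) (frogs c) x n \<Longrightarrow> reach r (fst c) (snd c) x n"
    by (induction rule: reach_frogs.induct) (auto intro: reach.step reach.start[simplified] simp: frogs_def)
qed

lemma reach_frogs_mono:
  "reach_frogs r S0 R x n \<Longrightarrow> (\<And>w. R w \<subseteq> R' w) \<Longrightarrow> reach_frogs r S0 R' x n"
  by (induction rule: reach_frogs.induct) (auto intro: reach_frogs.intros)

lemma reach_frogs_add_cases:
  assumes "reach_frogs r S0 (R(v := R v \<union> B)) x n"
  shows "(\<exists>n'\<le>n. reach_frogs r S0 R x n') \<or> (\<exists>s\<le>n. reach_frogs r S0 R v s)"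
  using assms
proof (induction rule: reach_frogs.induct)
  case (start j)
  then show ?case by (auto intro: reach_frogs.start)
next
  case (step w s P j)
  show ?case
  proof (cases "P \<in> R w")
    case True
    with step.IH step.hyps(2) show ?thesis
      by (metis add_le_mono1 reach_frogs.step trans_le_add1)
  next
    case False
    with step.hyps(3) have "w = v" by (cases "w = v") simp_all
    with step.IH show ?thesis by (meson le_add1 order_trans)
  qed
qed

text \<open>A run using extra frogs at v can be shortcut: replace everything before its last extra
  frog by a run reaching v without extra frogs, which exists no later by the previous lemma.\<close>

lemma reach_frogs_add_one:
  assumes "reach_frogs r S0 (R(v := R v \<union> B)) x n"
  shows "\<exists>n'\<le>n. reach_frogs r S0 R x n' \<or> (\<exists>P\<in>B. reach_frogs r S0 (R(v := insert P (R v))) x n')"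
  using assms
proof (induction rule: reach_frogs.induct)
  case (start j)
  then show ?case by (auto intro: reach_frogs.start)
next
  case (step w s P j)
  show ?case
  proof (cases "P \<in> R w")
    case True
    from step.IH obtain n' P' where "n' \<le> s"
      and "reach_frogs r S0 R w n' \<or> P' \<in> B \<and> reach_frogs r S0 (R(v := insert P' (R v))) w n'"
      by blast
    with True step.hyps(2) show ?thesis
      by (metis (no_types, lifting) add_le_mono1 fun_upd_apply insertCI reach_frogs.step)
  next
    case False
    with step.hyps(3) have "w = v" "P \<in> B" by (cases "w = v"; simp)+
    moreover obtain s0 where "s0 \<le> s" "reach_frogs r S0 R v s0"
      using reach_frogs_add_cases[OF step.hyps(1)] \<open>w = v\<close> by blast
    moreover have "reach_frogs r S0 (R(v := insert P (R v))) v s0"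
      using \<open>reach_frogs r S0 R v s0\<close> by (rule reach_frogs_mono) auto
    ultimately show ?thesis using step.hyps(2)
      by (metis add_le_mono1 fun_upd_same insertI1 reach_frogs.step)
  qed
qed

definition visited_frogs :: "'v \<Rightarrow> enat \<Rightarrow> (nat \<Rightarrow> 'v) \<Rightarrow> ('v \<Rightarrow> (nat \<Rightarrow> 'v) set) \<Rightarrow> 'v \<Rightarrow> bool" where
  "visited_frogs r t S0 R w = (\<exists>n. enat n \<le> t \<and> reach_frogs r S0 R w n)"

lemma visited_by_iff_visited_frogs: "visited_by r t w c \<longleftrightarrow> visited_frogs r t (snd c r 1) (frogs c) w"
  unfolding visited_by_def visited_frogs_def reach_iff_reach_frogs ..

lemma visited_frogs_mono: "visited_frogs r t S0 R w \<Longrightarrow> (\<And>x. R x \<subseteq> R' x) \<Longrightarrow> visited_frogs r t S0 R' w"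
  unfolding visited_frogs_def by (metis reach_frogs_mono)

lemma visited_frogs_add_iff:
  "visited_frogs r t S0 (R(v := R v \<union> B)) w \<longleftrightarrow>
     visited_frogs r t S0 R w \<or> (\<exists>P\<in>B. visited_frogs r t S0 (R(v := insert P (R v))) w)"
proof
  assume "visited_frogs r t S0 (R(v := R v \<union> B)) w"
  then obtain n n' where "enat n \<le> t" "n' \<le> n"
    and "reach_frogs r S0 R w n' \<or> (\<exists>P\<in>B. reach_frogs r S0 (R(v := insert P (R v))) w n')"
    unfolding visited_frogs_def by (meson reach_frogs_add_one)
  moreover have "enat n' \<le> t" using \<open>enat n \<le> t\<close> \<open>n' \<le> n\<close> by (meson enat_ord_simps(1) order_trans)
  ultimately show "visited_frogs r t S0 R w \<or> (\<exists>P\<in>B. visited_frogs r t S0 (R(v := insert P (R v))) w)"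
    unfolding visited_frogs_def by blast
next
  assume "visited_frogs r t S0 R w \<or> (\<exists>P\<in>B. visited_frogs r t S0 (R(v := insert P (R v))) w)"
  then show "visited_frogs r t S0 (R(v := R v \<union> B)) w"
    by (auto elim!: visited_frogs_mono)
qed

lemma visited_by_fold_sigma_mono:
  assumes "\<forall>P\<in>set L. P 0 = v" "v \<noteq> r" "set L' \<subseteq> set L" "visited_by r t w (fold sigma L' c)"
  shows "visited_by r t w (fold sigma L c)"
proof -
  have "\<forall>P\<in>set L'. P 0 = v" using assms(1,3) by blast
  with assms show ?thesis
    unfolding visited_by_iff_visited_frogs
    by (simp add: snd_fold_sigma_root[of L v r] snd_fold_sigma_root[of L' v r] frogs_fold_sigma)
      (erule visited_frogs_mono, auto)
qed

lemma visited_by_sigma: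
  "P 0 \<noteq> r \<Longrightarrow> visited_by r t w c \<Longrightarrow> visited_by r t w (sigma P c)"
  using visited_by_fold_sigma_mono[of "[P]" "P 0" r "[]"] by simp

lemma visited_by_sigma_sigma_iff:
  assumes "P 0 = v" "Q 0 = v" "v \<noteq> r"
  shows "visited_by r t w (sigma Q (sigma P c)) \<longleftrightarrow> visited_by r t w (sigma P c) \<or> visited_by r t w (sigma Q c)"
proof -
  have "visited_by r t w (sigma Q (sigma P c)) \<longleftrightarrow>
      visited_frogs r t (snd c r 1) ((frogs c)(v := frogs c v \<union> {P, Q})) w"
    using assms frogs_fold_sigma[of "[P, Q]" v c] snd_fold_sigma_root[of "[P, Q]" v r c]
    by (simp add: visited_by_iff_visited_frogs)
  also have "\<dots> \<longleftrightarrow> visited_frogs r t (snd c r 1) ((frogs c)(v := insert P (frogs c v))) w \<or>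
      visited_frogs r t (snd c r 1) ((frogs c)(v := insert Q (frogs c v))) w"
    by (subst visited_frogs_add_iff) (auto elim: visited_frogs_mono)
  also have "\<dots> \<longleftrightarrow> visited_by r t w (sigma P c) \<or> visited_by r t w (sigma Q c)"
    using assms snd_fold_sigma_root[of "[P]" v r c] snd_fold_sigma_root[of "[Q]" v r c]
    by (simp add: visited_by_iff_visited_frogs frogs_sigma)
  finally show ?thesis .
qed

definition visited_count :: "'v \<Rightarrow> enat \<Rightarrow> 'v set \<Rightarrow> 'v config \<Rightarrow> ennreal" where
  "visited_count r t A c = emeasure (count_space UNIV) {w\<in>A. visited_by r t w c}"

lemma a_vis_eq_visited_count: "a_vis r t u = visited_count r t {u}"
proof
  fix c
  have "{w\<in>{u}. visited_by r t w c} = (if visited_by r t u c then {u} else {})" by auto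
  then show "a_vis r t u c = visited_count r t {u} c" by (simp add: a_vis_def visited_count_def)
qed

lemma a_tot_eq_visited_count: "a_tot r t = visited_count r t {w. w \<noteq> r}"
proof
  fix c
  let ?V = "{w \<in> {w. w \<noteq> r}. visited_by r t w c}"
  have "a_tot r t c = infsum (\<lambda>_. 1::ennreal) ?V"
    unfolding a_tot_def by (rule infsum_cong_neutral) (auto simp: a_vis_def)
  also have "\<dots> = visited_count r t {w. w \<noteq> r} c"
    by (cases "finite ?V")
      (simp_all add: visited_count_def infsum_superconst_infinite_ennreal[where b=1])
  finally show "a_tot r t c = visited_count r t {w. w \<noteq> r} c" .
qed

lemma visited_count_eq_top_iff:
  "visited_count r t A c = \<infinity> \<longleftrightarrow> infinite {w\<in>A. visited_by r t w c}"
  by (simp add: visited_count_def emeasure_count_space)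

lemma enn2real_visited_count:
  assumes "finite F" "{w\<in>A. visited_by r t w c} \<subseteq> F" "F \<subseteq> A"
  shows "enn2real (visited_count r t A c) = (\<Sum>w\<in>F. if visited_by r t w c then 1 else 0)"
proof -
  have "{w\<in>A. visited_by r t w c} = {w\<in>F. visited_by r t w c}" using assms(2,3) by blast
  with assms(1) show ?thesis by (simp add: visited_count_def sum.If_cases Int_def)
qed

lemma cond_ii_visited_count: "cond_ii r (visited_count r t A :: 'v config \<Rightarrow> ennreal)"
  unfolding cond_ii_def visited_count_eq_top_iff
proof (intro allI impI)
  fix c and P :: "nat \<Rightarrow> 'v"
  assume "P 0 \<noteq> r" "infinite {w\<in>A. visited_by r t w c}"
  then show "infinite {w\<in>A. visited_by r t w (sigma P c)}"
    by (rule_tac infinite_super[rotated]) (auto intro: visited_by_sigma)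
qed

lemma cond_iii_visited_count: "cond_iii r (visited_count r t A :: 'v config \<Rightarrow> ennreal)"
  unfolding cond_iii_def visited_count_eq_top_iff
proof (intro allI impI)
  fix c and P1 P2 :: "nat \<Rightarrow> 'v"
  assume "P1 0 \<noteq> r" "P1 0 = P2 0" and inf: "infinite {w\<in>A. visited_by r t w (sigma P1 (sigma P2 c))}"
  then have "{w\<in>A. visited_by r t w (sigma P1 (sigma P2 c))} =
      {w\<in>A. visited_by r t w (sigma P1 c)} \<union> {w\<in>A. visited_by r t w (sigma P2 c)}"
    using visited_by_sigma_sigma_iff[of P2 "P1 0" P1 r t _ c] by auto
  with inf show "infinite {w\<in>A. visited_by r t w (sigma P1 c)} \<or> infinite {w\<in>A. visited_by r t w (sigma P2 c)}"
    by simp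
qed

lemma Dit_const_diff:
  "Ps \<noteq> [] \<Longrightarrow> Dit Ps (\<lambda>y. a - g y) c = - Dit Ps g c"
proof (induction Ps arbitrary: c)
  case (Cons P Ps)
  then show ?case by (cases "Ps = []") (simp_all add: DeltaR_def)
qed simp

lemma Dit_sum: "Dit Ps (\<lambda>y. \<Sum>w\<in>F. g w y) c = (\<Sum>w\<in>F. Dit Ps (g w) c)"
  by (induction Ps arbitrary: c) (simp_all add: DeltaR_def sum_subtractf)

lemma Dit_cong:
  "(\<And>I. I \<subseteq> {..<length Ps} \<Longrightarrow> g (fold sigma (nths Ps I) c) = g' (fold sigma (nths Ps I) c))
    \<Longrightarrow> Dit Ps g c = Dit Ps g' c"
proof (induction Ps arbitrary: c)
  case Nil
  then show ?case using Nil[of "{}"] by simp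
next
  case (Cons P Ps)
  have "Dit Ps g (sigma P c) = Dit Ps g' (sigma P c)"
  proof (rule Cons.IH)
    fix I assume "I \<subseteq> {..<length Ps}"
    then show "g (fold sigma (nths Ps I) (sigma P c)) = g' (fold sigma (nths Ps I) (sigma P c))"
      using Cons.prems[of "insert 0 (Suc ` I)"] by (auto simp: nths_Cons inj_image_mem_iff)
  qed
  moreover have "Dit Ps g c = Dit Ps g' c"
  proof (rule Cons.IH)
    fix I assume "I \<subseteq> {..<length Ps}"
    then show "g (fold sigma (nths Ps I) c) = g' (fold sigma (nths Ps I) c)"
      using Cons.prems[of "Suc ` I"] by (auto simp: nths_Cons inj_image_mem_iff)
  qed
  ultimately show ?case by (simp add: DeltaR_def)
qed

lemma Dit_unvisited_eq_prod_list:
  assumes "\<forall>P\<in>set Ps. P 0 = v" "v \<noteq> r"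
  shows "Dit Ps (\<lambda>y. if visited_by r t w y then 0 else 1) c =
    (if visited_by r t w c then 0 else 1) *
      (\<Prod>P\<leftarrow>Ps. (if visited_by r t w (sigma P c) then 0 else 1) - 1)"
  using assms(1)
proof (induction Ps arbitrary: c)
  case (Cons P Ps)
  then have "P 0 = v" "\<forall>Q\<in>set Ps. Q 0 = v" by auto
  have "\<not> visited_by r t w (sigma P c) \<Longrightarrow>
      (\<Prod>Q\<leftarrow>Ps. (if visited_by r t w (sigma Q (sigma P c)) then 0 else 1) - 1) =
      (\<Prod>Q\<leftarrow>Ps. (if visited_by r t w (sigma Q c) then 0 else 1) - 1)"
    using \<open>P 0 = v\<close> \<open>\<forall>Q\<in>set Ps. Q 0 = v\<close> assms(2)
    by (intro arg_cong[where f=prod_list] map_cong) (auto simp: visited_by_sigma_sigma_iff)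
  moreover have "visited_by r t w c \<Longrightarrow> visited_by r t w (sigma P c)"
    using \<open>P 0 = v\<close> assms(2) by (auto intro: visited_by_sigma)
  ultimately show ?case
    using Cons.IH[OF \<open>\<forall>Q\<in>set Ps. Q 0 = v\<close>]
    by (cases "visited_by r t w (sigma P c)") (auto simp: DeltaR_def)
qed simp

lemma sign_prod_list_minus_one:
  fixes f :: "'b \<Rightarrow> 'a::linordered_idom"
  assumes "\<forall>x\<in>set xs. f x \<le> 1"
  shows "0 \<le> (-1) ^ length xs * (\<Prod>x\<leftarrow>xs. f x - 1)"
  using assms
proof (induction xs)
  case (Cons x xs)
  then have "0 \<le> (1 - f x) * ((-1) ^ length xs * (\<Prod>x\<leftarrow>xs. f x - 1))" by simp
  then show ?case by (simp add: algebra_simps)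
qed simp

lemma Dit_visited_sign:
  assumes "Ps \<noteq> []" "\<forall>P\<in>set Ps. P 0 = v" "v \<noteq> r"
  shows "(-1) ^ length Ps * Dit Ps (\<lambda>y. if visited_by r t w y then 1 else 0) c \<le> 0"
proof -
  let ?h = "\<lambda>y. if visited_by r t w y then 0 else 1 :: real"
  have "Dit Ps (\<lambda>y. if visited_by r t w y then 1 else 0) c = Dit Ps (\<lambda>y. 1 - ?h y) c"
    by (rule arg_cong[where f="\<lambda>g. Dit Ps g c"]) auto
  also have "\<dots> = - (?h c * (\<Prod>P\<leftarrow>Ps. ?h (sigma P c) - 1))"
    using assms by (simp add: Dit_const_diff Dit_unvisited_eq_prod_list)
  finally have "(-1) ^ length Ps * Dit Ps (\<lambda>y. if visited_by r t w y then 1 else 0) c =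
      - (?h c * ((-1) ^ length Ps * (\<Prod>P\<leftarrow>Ps. ?h (sigma P c) - 1)))"
    by (simp add: algebra_simps)
  moreover have "0 \<le> (-1) ^ length Ps * (\<Prod>P\<leftarrow>Ps. ?h (sigma P c) - 1)"
    by (rule sign_prod_list_minus_one) auto
  ultimately show ?thesis by simp
qed

lemma cond_i_visited_count: "1 \<le> m \<Longrightarrow> cond_i r m (visited_count r t A)"
  unfolding cond_i_def common_start_def
proof (intro allI impI)
  fix c Ps
  assume "1 \<le> m" "length Ps = m" "\<exists>v. v \<noteq> r \<and> (\<forall>P\<in>set Ps. P 0 = v)"
    and fin: "all_finite (visited_count r t A) c Ps"
  then obtain v where v: "v \<noteq> r" "\<forall>P\<in>set Ps. P 0 = v" and "Ps \<noteq> []" by force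
  define F where "F = {w\<in>A. visited_by r t w (fold sigma Ps c)}"
  have "finite F"
    using fin[unfolded all_finite_def, rule_format, of "{..<length Ps}"]
      visited_count_eq_top_iff[of r t A "fold sigma Ps c"]
    by (simp add: F_def nths_all)
  have "enn2real (visited_count r t A (fold sigma (nths Ps I) c)) =
      (\<Sum>w\<in>F. if visited_by r t w (fold sigma (nths Ps I) c) then 1 else 0)" for I
    using \<open>finite F\<close>
    by (intro enn2real_visited_count)
      (auto simp: F_def intro: visited_by_fold_sigma_mono[OF v(2,1) set_nths_subset])
  then have "Dit Ps (\<lambda>y. enn2real (visited_count r t A y)) c =
      (\<Sum>w\<in>F. Dit Ps (\<lambda>y. if visited_by r t w y then 1 else 0) c)"
    by (simp add: Dit_cong[where g'="\<lambda>y. \<Sum>w\<in>F. if visited_by r t w y then 1 else 0"] Dit_sum)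
  then have "(-1) ^ m * Dit Ps (\<lambda>y. enn2real (visited_count r t A y)) c =
      (\<Sum>w\<in>F. (-1) ^ length Ps * Dit Ps (\<lambda>y. if visited_by r t w y then 1 else 0) c)"
    by (simp add: sum_distrib_left \<open>length Ps = m\<close>)
  also have "\<dots> \<le> 0"
    using \<open>Ps \<noteq> []\<close> v by (intro sum_nonpos Dit_visited_sign) auto
  finally show "(-1) ^ m * Dit Ps (\<lambda>y. enn2real (visited_count r t A y)) c \<le> 0" .
qed

lemma reach_mono_counts:
  "reach r eta S x n \<Longrightarrow> (\<And>w. eta w \<le> eta' w) \<Longrightarrow> reach r eta' S x n"
proof (induction rule: reach.induct)
  case (start j)
  show ?case by (rule reach.start)
next
  case (step v s i j)
  then show ?case by (metis reach.step order_trans)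
qed

lemma reach_eventually:
  "reach r eta S x n \<Longrightarrow> (\<And>w. eventually (\<lambda>k. etas k w = eta w) sequentially)
    \<Longrightarrow> eventually (\<lambda>k. reach r (etas k) S x n) sequentially"
proof (induction rule: reach.induct)
  case (start j)
  show ?case by (intro always_eventually allI) (rule reach.start)
next
  case (step v s i j)
  have "eventually (\<lambda>k. reach r (etas k) S v s \<and> etas k v = eta v) sequentially"
    using step.IH step.prems by (intro eventually_conj) auto
  then show ?case
    by eventually_elim (use step.hyps in \<open>auto intro: reach.step\<close>)
qed

lemma visited_sets_incseq_Union:
  assumes "\<forall>v. incseq (\<lambda>k. etas k v) \<and> (\<lambda>k. etas k v) \<longlonglongrightarrow> eta v"
  shows "incseq (\<lambda>k. {w\<in>A. visited_by r t w (etas k, S)})"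
    and "(\<Union>k. {w\<in>A. visited_by r t w (etas k, S)}) = {w\<in>A. visited_by r t w (eta, S)}"
proof -
  have "k \<le> k' \<Longrightarrow> etas k v \<le> etas k' v" for k k' v
    using assms by (auto simp: incseq_def)
  then show "incseq (\<lambda>k. {w\<in>A. visited_by r t w (etas k, S)})"
    unfolding incseq_def visited_by_def by (fastforce intro: reach_mono_counts)
  have le: "etas k v \<le> eta v" for k v
    using assms incseq_le by blast
  have ev: "eventually (\<lambda>k. etas k v = eta v) sequentially" for v
    using assms by (simp add: tendsto_discrete)
  show "(\<Union>k. {w\<in>A. visited_by r t w (etas k, S)}) = {w\<in>A. visited_by r t w (eta, S)}"
  proof (intro equalityI subsetI)
    fix w assume "w \<in> (\<Union>k. {w\<in>A. visited_by r t w (etas k, S)})"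
    then show "w \<in> {w\<in>A. visited_by r t w (eta, S)}"
      unfolding visited_by_def using le by (auto intro: reach_mono_counts)
  next
    fix w assume "w \<in> {w\<in>A. visited_by r t w (eta, S)}"
    then obtain n where "w \<in> A" "enat n \<le> t" "reach r eta S w n"
      unfolding visited_by_def by auto
    moreover obtain k where "reach r (etas k) S w n"
      using reach_eventually[OF \<open>reach r eta S w n\<close> ev] by (auto simp: eventually_sequentially)
    ultimately show "w \<in> (\<Union>k. {w\<in>A. visited_by r t w (etas k, S)})"
      unfolding visited_by_def by auto
  qed
qed

lemma continuous_stat_visited_count:
  "continuous_stat r (visited_count r t A :: 'v config \<Rightarrow> ennreal)"
  unfolding continuous_stat_def visited_count_def
proof (intro allI impI conjI)
  fix etas :: "nat \<Rightarrow> 'v \<Rightarrow> nat" and eta S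
  assume "\<forall>v. incseq (\<lambda>k. etas k v) \<and> (\<lambda>k. etas k v) \<longlonglongrightarrow> eta v"
  note visited = visited_sets_incseq_Union[OF this, of A r t S]
  show "incseq (\<lambda>k. emeasure (count_space UNIV) {w\<in>A. visited_by r t w (etas k, S)})"
    using visited(1) by (intro incseq_emeasure) auto
  show "(\<lambda>k. emeasure (count_space UNIV) {w\<in>A. visited_by r t w (etas k, S)})
      \<longlonglongrightarrow> emeasure (count_space UNIV) {w\<in>A. visited_by r t w (eta, S)}"
    using Lim_emeasure_incseq[OF _ visited(1)] by (simp add: visited(2))
qed

theorem proposition21:
  fixes r :: "'v::countable" and t :: enat and u :: 'v
  assumes "u \<noteq> r"
  shows "continuous_stat r (a_vis r t u) \<and> icv_stat r (a_vis r t u) \<and> pgf_stat r (a_vis r t u)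
       \<and> continuous_stat r (a_tot r t) \<and> icv_stat r (a_tot r t) \<and> pgf_stat r (a_tot r t)"
  unfolding a_vis_eq_visited_count a_tot_eq_visited_count icv_stat_def pgf_stat_def
  by (simp add: continuous_stat_visited_count cond_i_visited_count
      cond_ii_visited_count cond_iii_visited_count)

end
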